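(* Let $n\ge 2$, $q>0$, and let $A\in M_n(\mathbb{C})$ satisfy $\operatorname{tr}A=0$ and $\operatorname{rank}A=1$. Then for all $B\in M_n(\mathbb{C})$, $$\|AB-qBA\|_F^2\le (1+q^2)\,\|A\|_F^2\,\|B\|_F^2 .$$
   Context: $\|X\|_F=\sqrt{\operatorname{tr}(XX^\dagger)}$ denotes the Frobenius norm. *)

theory Defs
  imports "HOL-Analysis.Analysis"
begin

definition conj_transpose :: "complex^'n^'m \<Rightarrow> complex^'m^'n" where
  "conj_transpose X = transpose (map_matrix cnj X)"

text \<open>Frobenius norm: sqrt of tr(X X^dagger) (which is a nonnegative real).\<close>
definition frob_norm :: "complex^'n^'n \<Rightarrow> real" where
  "frob_norm X = sqrt (Re (trace (X ** conj_transpose X)))"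

end

(*
  A rank-one matrix is an outer product A = c v\<^sup>T, and trace A = 0 says v\<^sup>T c = 0.
  Then AB - qBA = c a\<^sup>T - q b v\<^sup>T with a\<^sup>T = v\<^sup>T B and b = B c, so
  \<parallel>AB - qBA\<parallel>\<^sup>2 = \<parallel>c\<parallel>\<^sup>2\<parallel>a\<parallel>\<^sup>2 + q\<^sup>2\<parallel>v\<parallel>\<^sup>2\<parallel>b\<parallel>\<^sup>2 - 2q Re(\<langle>c,b\<rangle>\<langle>a,v\<rangle>).
  The orthogonality of c and conj v (and of conj c and v) lets Bessel's inequality, applied to the
  columns (rows) of B, bound \<parallel>a\<parallel>\<^sup>2 (\<parallel>b\<parallel>\<^sup>2) with a slack given by the complementary Bessel
  coefficients; by Cauchy-Schwarz and AM-GM this slack absorbs the cross term.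
*)

theory Submission
  imports Defs
begin

definition herm_inner :: "('n::finite \<Rightarrow> complex) \<Rightarrow> ('n \<Rightarrow> complex) \<Rightarrow> complex" where
  "herm_inner f g = (\<Sum>j\<in>UNIV. f j * cnj (g j))"

definition sq_norm :: "('n::finite \<Rightarrow> complex) \<Rightarrow> real" where
  "sq_norm f = (\<Sum>j\<in>UNIV. (cmod (f j))\<^sup>2)"

lemma herm_inner_commute: "herm_inner g f = cnj (herm_inner f g)"
  by (simp add: herm_inner_def mult.commute)

lemma herm_inner_diff_left:
  "herm_inner (\<lambda>j. a * f j - b * g j) h = a * herm_inner f h - b * herm_inner g h"
  by (simp add: herm_inner_def sum_subtractf sum_distrib_left algebra_simps)

lemma herm_inner_mult_right: "herm_inner f (\<lambda>j. a * g j) = cnj a * herm_inner f g"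
  by (simp add: herm_inner_def sum_distrib_left algebra_simps)

lemma herm_inner_swap:
  "herm_inner (\<lambda>j. herm_inner (\<lambda>i. M i j) x) y = herm_inner (\<lambda>i. herm_inner (\<lambda>j. M i j) y) x"
  unfolding herm_inner_def sum_distrib_right by (subst sum.swap) (simp add: mult_ac)

lemma sq_norm_nonneg: "0 \<le> sq_norm f"
  by (simp add: sq_norm_def sum_nonneg)

lemma sq_norm_eq_0_iff: "sq_norm f = 0 \<longleftrightarrow> (\<forall>j. f j = 0)"
  by (simp add: sq_norm_def sum_nonneg_eq_0_iff)

lemma sq_norm_mult: "sq_norm (\<lambda>j. a * f j) = (cmod a)\<^sup>2 * sq_norm f"
  by (simp add: sq_norm_def norm_mult power_mult_distrib sum_distrib_left)

lemma sq_norm_cnj: "sq_norm (\<lambda>j. cnj (f j)) = sq_norm f"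
  by (simp add: sq_norm_def)

lemma sq_norm_diff:
  "sq_norm (\<lambda>j. a * f j - b * g j)
     = (cmod a)\<^sup>2 * sq_norm f + (cmod b)\<^sup>2 * sq_norm g - 2 * Re (a * cnj b * herm_inner f g)"
proof -
  have cmod_diff: "(cmod (z - w))\<^sup>2 = (cmod z)\<^sup>2 + (cmod w)\<^sup>2 - 2 * Re (z * cnj w)" for z w :: complex
    unfolding cmod_power2 by (simp add: power2_eq_square algebra_simps)
  have "sq_norm (\<lambda>j. a * f j - b * g j)
      = (\<Sum>j\<in>UNIV. (cmod a)\<^sup>2 * (cmod (f j))\<^sup>2 + (cmod b)\<^sup>2 * (cmod (g j))\<^sup>2
                      - 2 * Re (a * cnj b * (f j * cnj (g j))))"
    unfolding sq_norm_def cmod_diff by (simp add: norm_mult power_mult_distrib mult_ac)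
  also have "\<dots> = (cmod a)\<^sup>2 * sq_norm f + (cmod b)\<^sup>2 * sq_norm g
      - 2 * Re (\<Sum>j\<in>UNIV. a * cnj b * (f j * cnj (g j)))"
    by (simp add: sq_norm_def Re_sum sum_subtractf sum.distrib sum_distrib_left)
  finally show ?thesis
    by (simp add: herm_inner_def sum_distrib_left)
qed

lemma herm_inner_Cauchy_Schwarz: "(cmod (herm_inner f g))\<^sup>2 \<le> sq_norm f * sq_norm g"
proof -
  have "cmod (herm_inner f g) \<le> (\<Sum>j\<in>UNIV. \<bar>cmod (f j)\<bar> * \<bar>cmod (g j)\<bar>)"
    unfolding herm_inner_def using norm_sum[of "\<lambda>j. f j * cnj (g j)" UNIV] by (simp add: norm_mult)
  also have "\<dots> \<le> L2_set (\<lambda>j. cmod (f j)) UNIV * L2_set (\<lambda>j. cmod (g j)) UNIV"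
    by (rule L2_set_mult_ineq)
  also have "\<dots> = sqrt (sq_norm f * sq_norm g)"
    by (simp add: L2_set_def sq_norm_def real_sqrt_mult)
  finally have "(cmod (herm_inner f g))\<^sup>2 \<le> (sqrt (sq_norm f * sq_norm g))\<^sup>2"
    by (rule power_mono) simp
  then show ?thesis
    by (simp add: sq_norm_nonneg)
qed

lemma herm_inner_Bessel:
  assumes orth: "herm_inner u w = 0"
  shows "sq_norm w * (cmod (herm_inner r u))\<^sup>2 + sq_norm u * (cmod (herm_inner r w))\<^sup>2
           \<le> sq_norm u * sq_norm w * sq_norm r"
proof (cases "sq_norm u = 0")
  case True
  then have "herm_inner r u = 0"
    by (simp add: herm_inner_def sq_norm_eq_0_iff)
  with True show ?thesis by simp
next
  case False
  txt \<open>Remove from r its component along u, then apply Cauchy-Schwarz to the rest against w.\<close>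
  define U where "U = sq_norm u"
  define \<alpha> where "\<alpha> = herm_inner r u"
  have U_pos: "U > 0"
    using False sq_norm_nonneg[of u] by (simp add: U_def)
  define r' where "r' = (\<lambda>j. 1 * r j - (\<alpha> / of_real U) * u j)"
  have "sq_norm r' = sq_norm r - (cmod \<alpha>)\<^sup>2 / U"
  proof -
    have "Re (cnj (\<alpha> / of_real U) * \<alpha>) = (cmod \<alpha>)\<^sup>2 / U"
      unfolding cmod_power2 by (simp add: power2_eq_square)
    then show ?thesis
      using U_pos unfolding r'_def sq_norm_diff
      by (simp add: U_def \<alpha>_def norm_divide power_divide power2_eq_square)
  qed
  moreover have "herm_inner r' w = herm_inner r w"
    unfolding r'_def herm_inner_diff_left using orth by simp
  ultimately have "(cmod (herm_inner r w))\<^sup>2 \<le> (sq_norm r - (cmod \<alpha>)\<^sup>2 / U) * sq_norm w"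
    using herm_inner_Cauchy_Schwarz[of r' w] by simp
  then have "U * (cmod (herm_inner r w))\<^sup>2 \<le> U * ((sq_norm r - (cmod \<alpha>)\<^sup>2 / U) * sq_norm w)"
    using U_pos by simp
  also have "\<dots> = U * sq_norm w * sq_norm r - sq_norm w * (cmod \<alpha>)\<^sup>2"
    using U_pos by (simp add: field_simps)
  finally show ?thesis
    by (simp add: U_def \<alpha>_def)
qed

lemma sum_herm_inner_Bessel:
  assumes "herm_inner u w = 0"
  shows "sq_norm w * sq_norm (\<lambda>i. herm_inner (R i) u) + sq_norm u * sq_norm (\<lambda>i. herm_inner (R i) w)
         \<le> sq_norm u * sq_norm w * (\<Sum>i\<in>UNIV. sq_norm (R i))"
  using sum_mono[of UNIV, OF herm_inner_Bessel[OF assms, of "R _"]]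
  by (simp add: sq_norm_def[of "\<lambda>i. herm_inner (R i) _"] sum.distrib sum_distrib_left)

lemma two_mult_le_add_if_square_le_mult:
  fixes s x y :: real
  assumes "s\<^sup>2 \<le> x * y" "0 \<le> x" "0 \<le> y"
  shows "2 * s \<le> x + y"
proof (rule power2_le_imp_le)
  have "0 \<le> (x - y)\<^sup>2" by simp
  with assms(1) show "(2 * s)\<^sup>2 \<le> (x + y)\<^sup>2"
    by (simp add: power2_eq_square algebra_simps)
  show "0 \<le> x + y" using assms by simp
qed

lemma neg_mult_Re_le_add:
  fixes u :: complex and q x y :: real
  assumes "(cmod u)\<^sup>2 \<le> x * y" "0 \<le> x" "0 \<le> y"
  shows "- (2 * q * Re u) \<le> x + q\<^sup>2 * y"
proof -
  have "- (q * Re u) \<le> \<bar>q\<bar> * \<bar>Re u\<bar>"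
    by (metis abs_ge_minus_self abs_mult)
  also have "\<dots> \<le> \<bar>q\<bar> * cmod u"
    by (rule mult_left_mono[OF abs_Re_le_cmod]) simp
  finally have "- (2 * q * Re u) \<le> 2 * (\<bar>q\<bar> * cmod u)"
    by simp
  also have "\<dots> \<le> x + q\<^sup>2 * y"
  proof (rule two_mult_le_add_if_square_le_mult)
    show "(\<bar>q\<bar> * cmod u)\<^sup>2 \<le> x * (q\<^sup>2 * y)"
      using mult_left_mono[OF assms(1), of "q\<^sup>2"] by (simp add: power_mult_distrib mult_ac)
  qed (use assms in simp_all)
  finally show ?thesis .
qed

lemma frob_norm_square: "(frob_norm X)\<^sup>2 = (\<Sum>i\<in>UNIV. sq_norm (\<lambda>j. X$i$j))"
proof -
  have "trace (X ** conj_transpose X) = of_real (\<Sum>i\<in>UNIV. sq_norm (\<lambda>j. X$i$j))"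
    by (simp add: trace_def matrix_matrix_mult_def conj_transpose_def transpose_def map_matrix_def
        sq_norm_def of_real_sum flip: complex_norm_square)
  then show ?thesis
    by (simp add: frob_norm_def sum_nonneg sq_norm_nonneg)
qed

lemma rank_one_outer_product:
  fixes A :: "'a::field^'n^'m"
  assumes "rank A = 1"
  obtains c v where "\<And>i j. A$i$j = c i * v j"
proof -
  have "vec.dim (rows A) = 1"
    using assms by (simp add: row_rank_def_gen)
  then obtain Bs where "rows A \<subseteq> vec.span Bs" "card Bs = 1"
    using vec.basis_exists[of "rows A"] by metis
  then obtain v where "rows A \<subseteq> vec.span {v}"
    using card_1_singletonE by metis
  then have "\<exists>k. row i A = k *s v" for i
    using vec.span_singleton[of v] by (auto simp: rows_def)
  then obtain c where "\<And>i. row i A = c i *s v"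
    by metis
  then have "A$i$j = c i * v $ j" for i j
    by (metis row_def vec_lambda_eta vector_smult_component)
  then show ?thesis
    using that by blast
qed

lemma sum_sq_norm_diff_outer:
  "(\<Sum>i\<in>UNIV. sq_norm (\<lambda>j. x i * f j - y i * g j))
     = sq_norm x * sq_norm f + sq_norm y * sq_norm g - 2 * Re (herm_inner x y * herm_inner f g)"
proof -
  have "(\<Sum>i\<in>UNIV. Re (x i * cnj (y i) * herm_inner f g)) = Re (herm_inner x y * herm_inner f g)"
    by (simp add: herm_inner_def[of x y] sum_distrib_right Re_sum)
  then show ?thesis
    unfolding sq_norm_diff sum_subtractf sum.distrib sum_distrib_left[symmetric]
      sum_distrib_right[symmetric] sq_norm_def[of x, symmetric] sq_norm_def[of y, symmetric]
    by simp
qed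

lemma frob_norm_outer_commutator_square:
  fixes A B :: "complex^'n^'n" and c v :: "'n \<Rightarrow> complex" and q :: real
  assumes A: "\<And>i j. A$i$j = c i * v j"
  defines "a \<equiv> \<lambda>j. \<Sum>i\<in>UNIV. v i * B$i$j" and "b \<equiv> \<lambda>i. \<Sum>j\<in>UNIV. B$i$j * c j"
  shows "(frob_norm (A ** B - q *\<^sub>R (B ** A)))\<^sup>2
           = sq_norm c * sq_norm a + q\<^sup>2 * (sq_norm v * sq_norm b) - 2 * q * Re (herm_inner c b * herm_inner a v)"
proof -
  have entries: "(A ** B - q *\<^sub>R (B ** A))$i$j = c i * a j - (of_real q * b i) * v j" for i j
    unfolding vector_minus_component vector_scaleR_component
    by (simp add: matrix_matrix_mult_def A a_def b_def sum_distrib_left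
        sum_distrib_right scaleR_conv_of_real algebra_simps)
  show ?thesis
    unfolding frob_norm_square entries sum_sq_norm_diff_outer
    by (simp add: sq_norm_mult herm_inner_mult_right mult.assoc mult.left_commute)
qed

lemma frob_norm_outer_commutator_le:
  fixes A B :: "complex^'n^'n" and c v :: "'n \<Rightarrow> complex" and q :: real
  assumes A: "\<And>i j. A$i$j = c i * v j"
    and trace_zero: "(\<Sum>i\<in>UNIV. c i * v i) = 0"
  shows "(frob_norm (A ** B - q *\<^sub>R (B ** A)))\<^sup>2
           \<le> (1 + q\<^sup>2) * (frob_norm A)\<^sup>2 * (frob_norm B)\<^sup>2"
proof -
  define a where "a = (\<lambda>j. \<Sum>i\<in>UNIV. v i * B$i$j)"
  define b where "b = (\<lambda>i. \<Sum>j\<in>UNIV. B$i$j * c j)"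
  txt \<open>The Bessel coefficients complementary to a and b; they bound the cross term.\<close>
  define d where "d = (\<lambda>j. herm_inner (\<lambda>i. B$i$j) c)"
  define p where "p = (\<lambda>i. herm_inner (\<lambda>j. B$i$j) v)"
  define C where "C = sq_norm c"
  define V where "V = sq_norm v"
  define N where "N = (frob_norm B)\<^sup>2"
  have expand: "(frob_norm (A ** B - q *\<^sub>R (B ** A)))\<^sup>2
      = C * sq_norm a + q\<^sup>2 * (V * sq_norm b) - 2 * q * Re (herm_inner c b * herm_inner a v)"
    unfolding a_def b_def C_def V_def by (rule frob_norm_outer_commutator_square[OF A])
  have a_eq: "a = (\<lambda>j. herm_inner (\<lambda>i. B$i$j) (\<lambda>i. cnj (v i)))"
    by (simp add: a_def herm_inner_def mult.commute)
  have b_eq: "b = (\<lambda>i. herm_inner (\<lambda>j. B$i$j) (\<lambda>j. cnj (c j)))"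
    by (simp add: b_def herm_inner_def)
  have frob_A: "(frob_norm A)\<^sup>2 = C * V"
    by (simp add: frob_norm_square A sq_norm_mult C_def V_def sq_norm_def[of c] sum_distrib_right)
  have "herm_inner (\<lambda>j. cnj (c j)) v = cnj (\<Sum>i\<in>UNIV. c i * v i)"
    by (simp add: herm_inner_def)
  then have rows: "V * sq_norm b + C * sq_norm p \<le> C * V * N"
    using sum_herm_inner_Bessel[where u = "\<lambda>j. cnj (c j)" and w = v and R = "\<lambda>i j. B$i$j"] trace_zero
    by (simp add: sq_norm_cnj frob_norm_square b_eq p_def C_def V_def N_def)
  have "herm_inner c (\<lambda>j. cnj (v j)) = (\<Sum>i\<in>UNIV. c i * v i)"
    by (simp add: herm_inner_def)
  moreover have "N = (\<Sum>j\<in>UNIV. sq_norm (\<lambda>i. B$i$j))"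
    unfolding N_def frob_norm_square sq_norm_def by (rule sum.swap)
  ultimately have cols: "V * sq_norm d + C * sq_norm a \<le> C * V * N"
    using sum_herm_inner_Bessel[where u = c and w = "\<lambda>j. cnj (v j)" and R = "\<lambda>j i. B$i$j"] trace_zero
    by (simp add: sq_norm_cnj a_eq d_def C_def V_def)
  have "herm_inner c b = cnj (herm_inner d (\<lambda>j. cnj (c j)))"
    using herm_inner_swap[of "\<lambda>i j. B$i$j" c "\<lambda>j. cnj (c j)"]
    by (simp add: herm_inner_commute[of c] b_eq d_def)
  then have cs_cb: "(cmod (herm_inner c b))\<^sup>2 \<le> sq_norm d * C"
    using herm_inner_Cauchy_Schwarz[of d "\<lambda>j. cnj (c j)"] by (simp add: sq_norm_cnj C_def)
  have "herm_inner a v = herm_inner p (\<lambda>j. cnj (v j))"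
    using herm_inner_swap[of "\<lambda>i j. B$i$j" "\<lambda>j. cnj (v j)" v] by (simp add: a_eq p_def)
  then have cs_av: "(cmod (herm_inner a v))\<^sup>2 \<le> sq_norm p * V"
    using herm_inner_Cauchy_Schwarz[of p "\<lambda>j. cnj (v j)"] by (simp add: sq_norm_cnj V_def)
  have "(cmod (herm_inner c b * herm_inner a v))\<^sup>2 \<le> (sq_norm d * C) * (sq_norm p * V)"
    unfolding norm_mult power_mult_distrib
    by (rule mult_mono[OF cs_cb cs_av]) (simp_all add: C_def sq_norm_nonneg)
  then have "- (2 * q * Re (herm_inner c b * herm_inner a v)) \<le> V * sq_norm d + q\<^sup>2 * (C * sq_norm p)"
    by (intro neg_mult_Re_le_add) (simp_all add: C_def V_def sq_norm_nonneg mult_ac)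
  moreover have "q\<^sup>2 * (V * sq_norm b) \<le> q\<^sup>2 * (C * V * N - C * sq_norm p)"
    using rows by (simp add: mult_left_mono)
  ultimately show ?thesis
    using cols unfolding expand frob_A N_def[symmetric] by (simp add: algebra_simps)
qed

theorem mainTheorem8:
  fixes A B :: "complex^'n^'n" and q :: real
  assumes "CARD('n) \<ge> 2"
    and "q > 0"
    and "trace A = 0"
    and "rank A = 1"
  shows "(frob_norm (A ** B - q *\<^sub>R (B ** A)))\<^sup>2
           \<le> (1 + q\<^sup>2) * (frob_norm A)\<^sup>2 * (frob_norm B)\<^sup>2"
proof -
  obtain c v where A: "\<And>i j. A$i$j = c i * v j"
    using rank_one_outer_product[OF assms(4)] by blast
  have "(\<Sum>i\<in>UNIV. c i * v i) = 0"
    using assms(3) by (simp add: trace_def A)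
  with A show ?thesis
    by (rule frob_norm_outer_commutator_le)
qed

end
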